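(* Every Type $\mathcal A$ affine surface geometry is strongly linearly projectively equivalent to a flat Type $\mathcal A$ affine surface geometry: for every Type $\mathcal A$ connection $\nabla$ on $\mathbb R^2$ there exist a real linear function $L$ and a flat Type $\mathcal A$ connection $\tilde\nabla$ with $\tilde\nabla={}^{-L}\nabla$ (equivalently $\nabla={}^{L}\tilde\nabla$).
   Context: An affine manifold $(M,\nabla)$ is a smooth manifold with a torsion-free connection on $TM$, with Christoffel symbols $\nabla_{\partial_{x^i}}\partial_{x^j}=\Gamma_{ij}^k\partial_{x^k}$. For real constants, $\Gamma(a,b,c,d,e,f)$ denotes the connection on $\mathbb R^2$ whose Christoffel symbols in the standard coordinates $(x^1,x^2)$ are the constants $\Gamma_{11}^1=a$, $\Gamma_{11}^2=b$, $\Gamma_{12}^1=\Gamma_{21}^1=c$, $\Gamma_{12}^2=\Gamma_{21}^2=d$, $\Gamma_{22}^1=e$, $\Gamma_{22}^2=f$; a Type $\mathcal A$ connection (affine surface geometry) is $(\mathbb R^2,\Gamma(a,b,c,d,e,f))$. For $g\in C^\infty(M)$ define ${}^g\nabla_XY:=\nabla_XY+X(g)Y+Y(g)X$. A linear function is $L(x^1,x^2)=a_1x^1+a_2x^2$ with $a_1,a_2\in\mathbb R$; for such $L$, ${}^L\Gamma(a,b,c,d,e,f)=\Gamma(a+2a_1,b,c+a_2,d+a_1,e,f+2a_2)$. Two Type $\mathcal A$ connections $\nabla,\tilde\nabla$ are strongly linearly projectively equivalent if $\tilde\nabla={}^L\nabla$ for some linear function $L$. *)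

theory Defs
  imports Complex_Main
begin

text \<open>A Type A connection Gamma(a,b,c,d,e,f) on R^2, given by its six constant
  Christoffel symbols (a,b,c,d,e,f) =
  (Gamma_11^1, Gamma_11^2, Gamma_12^1, Gamma_12^2, Gamma_22^1, Gamma_22^2).\<close>
type_synonym typeA = "real \<times> real \<times> real \<times> real \<times> real \<times> real"

definition Chr :: "typeA \<Rightarrow> nat \<Rightarrow> nat \<Rightarrow> nat \<Rightarrow> real" where
  "Chr G i j k = (case G of (a, b, c, d, e, f) \<Rightarrow>
     (if i = 1 \<and> j = 1 then (if k = 1 then a else b)
      else if i = 2 \<and> j = 2 then (if k = 1 then e else f)
      else (if k = 1 then c else d)))"

text \<open>Curvature components R(d_i, d_j) d_k = sum_m R_ijk^m d_m. Since the Christoffel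
  symbols are constant, the derivative terms vanish and
  R_ijk^m = sum_l (Gamma_jk^l Gamma_il^m - Gamma_ik^l Gamma_jl^m).\<close>
definition curv :: "typeA \<Rightarrow> nat \<Rightarrow> nat \<Rightarrow> nat \<Rightarrow> nat \<Rightarrow> real" where
  "curv G i j k m = (\<Sum>l\<in>{1,2}. Chr G j k l * Chr G i l m - Chr G i k l * Chr G j l m)"

definition flatA :: "typeA \<Rightarrow> bool" where
  "flatA G \<longleftrightarrow> (\<forall>i\<in>{1,2}. \<forall>j\<in>{1,2}. \<forall>k\<in>{1,2}. \<forall>m\<in>{1,2}. curv G i j k m = 0)"

text \<open>The linear projective deformation by L(x1,x2) = a1 x1 + a2 x2:
  ^L Gamma(a,b,c,d,e,f) = Gamma(a+2a1, b, c+a2, d+a1, e, f+2a2).\<close>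
definition linproj :: "real \<Rightarrow> real \<Rightarrow> typeA \<Rightarrow> typeA" where
  "linproj a1 a2 G = (case G of (a, b, c, d, e, f) \<Rightarrow>
     (a + 2*a1, b, c + a2, d + a1, e, f + 2*a2))"

end

theory Submission
  imports Defs "HOL-Real_Asymp.Real_Asymp"
begin

text \<open>The deformation by -L keeps b and e, moves c and d freely, and preserves a - 2d and f - 2c.
  So with p = a - 2d and q = f - 2c it suffices to find (C, D) making \<Gamma>(p+2D, b, C, D, e, q+2C)
  flat, a system of three quadratic equations. If b = 0, (C, D) = (0, -p) solves it; otherwise the
  second equation determines C from D and the system reduces to a monic cubic in D, which has a
  real root.\<close>

lemma flatA_iff:
  "flatA (a, b, c, d, e, f) \<longleftrightarrow>
     d*c = b*e \<and> c*b + d*d - a*d - b*f = 0 \<and> e*a + f*c - c*c - d*e = 0"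
  unfolding flatA_def curv_def Chr_def by (auto simp: algebra_simps)

lemma linproj_apply:
  "linproj (- a1) (- a2) (a, b, c, d, e, f) = (a - 2*a1, b, c - a2, d - a1, e, f - 2*a2)"
  by (simp add: linproj_def)

lemma flatA_normal_form_iff:
  "flatA (p + 2*D, b, C, D, e, q + 2*C) \<longleftrightarrow>
     D*C = b*e \<and> D*D + p*D + b*C + b*q = 0 \<and> C*C + q*C + e*D + e*p = 0"
  unfolding flatA_iff by (auto simp: algebra_simps)

lemma real_monic_cubic_has_root: "\<exists>x::real. x^3 + p*x^2 + r*x + s = 0"
proof -
  define g where "g = (\<lambda>x::real. x^3 + p*x^2 + r*x + s)"
  have "filterlim g at_top at_top" unfolding g_def by real_asymp
  then obtain M where M: "\<And>x. x \<ge> M \<Longrightarrow> g x \<ge> 0"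
    by (auto simp: filterlim_at_top eventually_at_top_linorder)
  have "filterlim g at_bot at_bot" unfolding g_def by real_asymp
  then obtain N where N: "\<And>x. x \<le> N \<Longrightarrow> g x \<le> 0"
    by (auto simp: filterlim_at_bot eventually_at_bot_linorder)
  have "continuous_on {min N M..max N M} g" unfolding g_def by (intro continuous_intros)
  then obtain x where "g x = 0"
    using IVT'[of g "min N M" 0 "max N M"] M N by force
  then show ?thesis unfolding g_def by blast
qed

lemma flatness_system_from_cubic_root:
  fixes b D p q e :: real
  assumes "b \<noteq> 0" and root: "D^3 + p*D^2 + (b*q)*D + b^2*e = 0"
  defines "C \<equiv> - (D*D + p*D) / b - q"
  shows "D*C = b*e \<and> D*D + p*D + b*C + b*q = 0 \<and> C*C + q*C + e*D + e*p = 0"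
proof -
  have bC: "b*C = - (D*D + p*D) - b*q"
    using \<open>b \<noteq> 0\<close> unfolding C_def by (simp add: field_simps)
  have "b*(D*C) = b*(b*e)"
  proof -
    have "b*(D*C) = D*(b*C)" by simp
    also have "\<dots> = - (D^3 + p*D^2 + (b*q)*D)"
      unfolding bC by (simp add: algebra_simps power2_eq_square power3_eq_cube)
    also have "\<dots> = b*(b*e)" using root by (simp add: power2_eq_square)
    finally show ?thesis .
  qed
  then have DC: "D*C = b*e" using \<open>b \<noteq> 0\<close> by simp
  have "b*(C*C + q*C + e*D + e*p) = (b*e)*(p + D) + C*(b*C + b*q)"
    by (simp add: algebra_simps)
  also have "\<dots> = (D*C)*(p + D) - C*(D*D + p*D)" unfolding DC[symmetric] bC by (simp add: algebra_simps)
  also have "\<dots> = 0" by (simp add: algebra_simps)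
  finally have "C*C + q*C + e*D + e*p = 0" using \<open>b \<noteq> 0\<close> by simp
  with DC bC show ?thesis by simp
qed

lemma flatness_system_solvable:
  fixes b e p q :: real
  shows "\<exists>C D. D*C = b*e \<and> D*D + p*D + b*C + b*q = 0 \<and> C*C + q*C + e*D + e*p = 0"
proof (cases "b = 0")
  case True
  then show ?thesis by (intro exI[of _ 0] exI[of _ "-p"]) (simp add: algebra_simps)
next
  case False
  obtain D where "D^3 + p*D^2 + (b*q)*D + b^2*e = 0"
    using real_monic_cubic_has_root by blast
  then show ?thesis using flatness_system_from_cubic_root[OF False] by blast
qed

theorem theorem2p3:
  fixes G :: typeA
  shows "\<exists>(a1::real) (a2::real) (G'::typeA). flatA G' \<and> G' = linproj (- a1) (- a2) G"
proof -
  obtain a b c d e f where G: "G = (a, b, c, d, e, f)" by (cases G) auto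
  obtain C D where "flatA (a - 2*d + 2*D, b, C, D, e, f - 2*c + 2*C)"
    using flatness_system_solvable[of b e "a - 2*d" "f - 2*c"] flatA_normal_form_iff by blast
  moreover have "linproj (- (d - D)) (- (c - C)) G = (a - 2*d + 2*D, b, C, D, e, f - 2*c + 2*C)"
    unfolding G linproj_apply by simp
  ultimately show ?thesis by metis
qed

end
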